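(* Let $\mathcal T$ be an orbital category and $\mathcal C$ a $\mathcal T$-weak indexing system. Then each of $c(\mathcal C)=\{V\in\mathcal T\mid *_V\in\mathcal C_V\}$, $\upsilon(\mathcal C)=\{V\in\mathcal T\mid\emptyset_V\in\mathcal C_V\}$, $\nabla(\mathcal C)=\{V\in\mathcal T\mid 2\cdot *_V\in\mathcal C_V\}$ is a $\mathcal T$-family.
   Context: For a small category $\mathcal T$, $\mathbb F_{\mathcal T}$ is the full subcategory of $\mathrm{Fun}(\mathcal T^{op},\mathrm{Set})$ on finite coproducts of representables; $\mathcal T$ is orbital if $\mathbb F_{\mathcal T}$ has pullbacks. $\mathbb F_V:=\mathbb F_{\mathcal T,/V}$, $*_V$ terminal, $\emptyset_V$ initial, $n\cdot S$ the $n$-fold coproduct; for $f:U\to V$ in $\mathcal T$, $\mathrm{Res}^V_U$ is pullback along $f$, $\mathrm{Ind}^V_U$ postcomposition. A full $\mathcal T$-subcategory $\mathcal C\subseteq\underline{\mathbb F}_{\mathcal T}$ is a choice of isomorphism-closed classes $\mathcal C_V\subseteq\mathrm{Ob}\,\mathbb F_V$ stable under all restrictions. For $S\in\mathbb F_V$ with orbits $U\in\mathrm{Orb}(S)$ (each with a map $U\to V$) and $T_U\in\mathbb F_U$, $\coprod_U^ST_U:=\coprod_U\mathrm{Ind}_U^VT_U$. A $\mathcal T$-weak indexing system is a full $\mathcal T$-subcategory $\mathcal C$ with: $\mathcal C_V\neq\emptyset\Rightarrow *_V\in\mathcal C_V$, and $S\in\mathcal C_V$, $T_U\in\mathcal C_U$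 for all $U$ imply $\coprod^S_UT_U\in\mathcal C_V$. A $\mathcal T$-family is a full subcategory $\mathcal F\subseteq\mathcal T$ such that for every morphism $V\to W$ with $W\in\mathcal F$ we have $V\in\mathcal F$. *)

theory Defs
  imports Main
begin

record ('o, 'm) cat =
  Obj :: "'o set"
  Hom :: "'o \<Rightarrow> 'o \<Rightarrow> 'm set"
  cmp :: "'m \<Rightarrow> 'm \<Rightarrow> 'm"   (* cmp g f = g after f *)
  idt :: "'o \<Rightarrow> 'm"

definition is_category :: "('o, 'm) cat \<Rightarrow> bool" where
  "is_category T \<longleftrightarrow>
     (\<forall>a b f. f \<in> Hom T a b \<longrightarrow> a \<in> Obj T \<and> b \<in> Obj T) \<and>
     (\<forall>a b a' b' f. f \<in> Hom T a b \<longrightarrow> f \<in> Hom T a' b' \<longrightarrow> a = a' \<and> b = b') \<and>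
     (\<forall>a\<in>Obj T. idt T a \<in> Hom T a a) \<and>
     (\<forall>a b c f g. f \<in> Hom T a b \<longrightarrow> g \<in> Hom T b c \<longrightarrow> cmp T g f \<in> Hom T a c) \<and>
     (\<forall>a b f. f \<in> Hom T a b \<longrightarrow> cmp T (idt T b) f = f \<and> cmp T f (idt T a) = f) \<and>
     (\<forall>a b c d f g h. f \<in> Hom T a b \<longrightarrow> g \<in> Hom T b c \<longrightarrow> h \<in> Hom T c d \<longrightarrow>
        cmp T h (cmp T g f) = cmp T (cmp T h g) f)"

text \<open>An object of F_T, a finite coproduct of representables, is represented by the
finite list of its summands (objects of T). A morphism from the list xs to the list ys
is a pair (sigma, fs): sigma sends the index i of a summand of xs to an index of ys and
fs i is a morphism of T from xs!i to ys!(sigma i) (Yoneda lemma; representables are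
coproduct-indecomposable).\<close>

type_synonym 'm ft_mor = "(nat \<Rightarrow> nat) \<times> (nat \<Rightarrow> 'm)"

definition ft_obj :: "('o, 'm) cat \<Rightarrow> 'o list \<Rightarrow> bool" where
  "ft_obj T xs \<longleftrightarrow> set xs \<subseteq> Obj T"

definition ft_mor :: "('o, 'm) cat \<Rightarrow> 'o list \<Rightarrow> 'o list \<Rightarrow> 'm ft_mor \<Rightarrow> bool" where
  "ft_mor T xs ys \<phi> \<longleftrightarrow> ft_obj T xs \<and> ft_obj T ys \<and>
     (\<forall>i<length xs. fst \<phi> i < length ys \<and> snd \<phi> i \<in> Hom T (xs ! i) (ys ! fst \<phi> i))"

definition ft_eq :: "'o list \<Rightarrow> 'm ft_mor \<Rightarrow> 'm ft_mor \<Rightarrow> bool" where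
  "ft_eq xs \<phi> \<psi> \<longleftrightarrow> (\<forall>i<length xs. fst \<phi> i = fst \<psi> i \<and> snd \<phi> i = snd \<psi> i)"

definition ft_comp :: "('o, 'm) cat \<Rightarrow> 'm ft_mor \<Rightarrow> 'm ft_mor \<Rightarrow> 'm ft_mor" where
  "ft_comp T \<psi> \<phi> = (fst \<psi> \<circ> fst \<phi>, \<lambda>i. cmp T (snd \<psi> (fst \<phi> i)) (snd \<phi> i))"

definition ft_id :: "('o, 'm) cat \<Rightarrow> 'o list \<Rightarrow> 'm ft_mor" where
  "ft_id T xs = (id, \<lambda>i. idt T (xs ! i))"

definition ft_pullback :: "('o, 'm) cat \<Rightarrow> 'o list \<Rightarrow> 'o list \<Rightarrow> 'o list \<Rightarrow> 'o list \<Rightarrow>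
    'm ft_mor \<Rightarrow> 'm ft_mor \<Rightarrow> 'm ft_mor \<Rightarrow> 'm ft_mor \<Rightarrow> bool" where
  "ft_pullback T P X Y Z p1 p2 f g \<longleftrightarrow>
     ft_mor T P X p1 \<and> ft_mor T P Y p2 \<and> ft_mor T X Z f \<and> ft_mor T Y Z g \<and>
     ft_eq P (ft_comp T f p1) (ft_comp T g p2) \<and>
     (\<forall>Q q1 q2. ft_mor T Q X q1 \<and> ft_mor T Q Y q2 \<and> ft_eq Q (ft_comp T f q1) (ft_comp T g q2) \<longrightarrow>
        (\<exists>h. ft_mor T Q P h \<and> ft_eq Q (ft_comp T p1 h) q1 \<and> ft_eq Q (ft_comp T p2 h) q2) \<and>
        (\<forall>h h'. ft_mor T Q P h \<and> ft_eq Q (ft_comp T p1 h) q1 \<and> ft_eq Q (ft_comp T p2 h) q2 \<and>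
                ft_mor T Q P h' \<and> ft_eq Q (ft_comp T p1 h') q1 \<and> ft_eq Q (ft_comp T p2 h') q2 \<longrightarrow>
                ft_eq Q h h'))"

definition orbital :: "('o, 'm) cat \<Rightarrow> bool" where
  "orbital T \<longleftrightarrow> is_category T \<and>
     (\<forall>X Y Z f g. ft_mor T X Z f \<and> ft_mor T Y Z g \<longrightarrow>
        (\<exists>P p1 p2. ft_pullback T P X Y Z p1 p2 f g))"

text \<open>An object of F_V is a list of pairs (U, p) with p : U \<rightarrow> V, i.e. the summands of
an object S of F_T together with the components of the structure map S \<rightarrow> V.\<close>

type_synonym ('o, 'm) fv_obj = "('o \<times> 'm) list"

definition fv_obj :: "('o, 'm) cat \<Rightarrow> 'o \<Rightarrow> ('o, 'm) fv_obj \<Rightarrow> bool" where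
  "fv_obj T V S \<longleftrightarrow> V \<in> Obj T \<and> (\<forall>(U, p)\<in>set S. U \<in> Obj T \<and> p \<in> Hom T U V)"

definition fv_struct :: "('o, 'm) fv_obj \<Rightarrow> 'm ft_mor" where
  "fv_struct S = (\<lambda>_. 0, \<lambda>i. snd (S ! i))"

definition fv_mor :: "('o, 'm) cat \<Rightarrow> 'o \<Rightarrow> ('o, 'm) fv_obj \<Rightarrow> ('o, 'm) fv_obj \<Rightarrow> 'm ft_mor \<Rightarrow> bool" where
  "fv_mor T V S S' \<phi> \<longleftrightarrow> ft_mor T (map fst S) (map fst S') \<phi> \<and>
     (\<forall>i<length S. cmp T (snd (S' ! fst \<phi> i)) (snd \<phi> i) = snd (S ! i))"

definition fv_iso :: "('o, 'm) cat \<Rightarrow> 'o \<Rightarrow> ('o, 'm) fv_obj \<Rightarrow> ('o, 'm) fv_obj \<Rightarrow> bool" where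
  "fv_iso T V S S' \<longleftrightarrow> fv_obj T V S \<and> fv_obj T V S' \<and>
     (\<exists>\<phi> \<psi>. fv_mor T V S S' \<phi> \<and> fv_mor T V S' S \<psi> \<and>
        ft_eq (map fst S) (ft_comp T \<psi> \<phi>) (ft_id T (map fst S)) \<and>
        ft_eq (map fst S') (ft_comp T \<phi> \<psi>) (ft_id T (map fst S')))"

definition term_V :: "('o, 'm) cat \<Rightarrow> 'o \<Rightarrow> ('o, 'm) fv_obj" where
  "term_V T V = [(V, idt T V)]"

definition init_V :: "('o, 'm) fv_obj" where
  "init_V = []"

definition two_term_V :: "('o, 'm) cat \<Rightarrow> 'o \<Rightarrow> ('o, 'm) fv_obj" where
  "two_term_V T V = [(V, idt T V), (V, idt T V)]"

definition is_restriction :: "('o, 'm) cat \<Rightarrow> 'o \<Rightarrow> 'o \<Rightarrow> 'm \<Rightarrow>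
    ('o, 'm) fv_obj \<Rightarrow> ('o, 'm) fv_obj \<Rightarrow> bool" where
  "is_restriction T U V f S R \<longleftrightarrow> fv_obj T U R \<and> fv_obj T V S \<and> f \<in> Hom T U V \<and>
     (\<exists>g. ft_pullback T (map fst R) (map fst S) [U] [V] g (fv_struct R) (fv_struct S) (\<lambda>_. 0, \<lambda>_. f))"

text \<open>Indexed coproduct: for S over V with orbits (S!i) and objects Ts i over the orbit
fst (S!i), form the coproduct of the inductions along snd (S!i).\<close>

definition indexed_coprod :: "('o, 'm) cat \<Rightarrow> ('o, 'm) fv_obj \<Rightarrow> (nat \<Rightarrow> ('o, 'm) fv_obj) \<Rightarrow> ('o, 'm) fv_obj" where
  "indexed_coprod T S Ts =
     concat (map (\<lambda>i. map (\<lambda>(W, q). (W, cmp T (snd (S ! i)) q)) (Ts i)) [0..<length S])"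

definition full_T_subcat :: "('o, 'm) cat \<Rightarrow> ('o \<Rightarrow> ('o, 'm) fv_obj set) \<Rightarrow> bool" where
  "full_T_subcat T C \<longleftrightarrow>
     (\<forall>V. \<forall>S\<in>C V. fv_obj T V S) \<and>
     (\<forall>V S S'. S \<in> C V \<longrightarrow> fv_iso T V S S' \<longrightarrow> S' \<in> C V) \<and>
     (\<forall>U V f S R. S \<in> C V \<longrightarrow> is_restriction T U V f S R \<longrightarrow> R \<in> C U)"

definition weak_indexing_system :: "('o, 'm) cat \<Rightarrow> ('o \<Rightarrow> ('o, 'm) fv_obj set) \<Rightarrow> bool" where
  "weak_indexing_system T C \<longleftrightarrow> full_T_subcat T C \<and>
     (\<forall>V\<in>Obj T. C V \<noteq> {} \<longrightarrow> term_V T V \<in> C V) \<and>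
     (\<forall>V\<in>Obj T. \<forall>S Ts. S \<in> C V \<longrightarrow> (\<forall>i<length S. Ts i \<in> C (fst (S ! i))) \<longrightarrow>
        indexed_coprod T S Ts \<in> C V)"

definition T_family :: "('o, 'm) cat \<Rightarrow> 'o set \<Rightarrow> bool" where
  "T_family T F \<longleftrightarrow> F \<subseteq> Obj T \<and> (\<forall>V W f. f \<in> Hom T V W \<longrightarrow> W \<in> F \<longrightarrow> V \<in> F)"

definition c_fam :: "('o, 'm) cat \<Rightarrow> ('o \<Rightarrow> ('o, 'm) fv_obj set) \<Rightarrow> 'o set" where
  "c_fam T C = {V \<in> Obj T. term_V T V \<in> C V}"

definition upsilon_fam :: "('o, 'm) cat \<Rightarrow> ('o \<Rightarrow> ('o, 'm) fv_obj set) \<Rightarrow> 'o set" where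
  "upsilon_fam T C = {V \<in> Obj T. init_V \<in> C V}"

definition nabla_fam :: "('o, 'm) cat \<Rightarrow> ('o \<Rightarrow> ('o, 'm) fv_obj set) \<Rightarrow> 'o set" where
  "nabla_fam T C = {V \<in> Obj T. two_term_V T V \<in> C V}"

end

theory Submission
  imports Defs
begin

(* Restricting n copies of the terminal object along f : V -> W gives n copies of the
   terminal object: the pullback of n.W -> W along f is n.V, with first projection f on
   each summand. Since a full T-subcategory is closed under restriction, the set of V with
   n.*_V in C_V is closed under passing to the source of a morphism, and c, upsilon, nabla
   are the cases n = 1, 0, 2. *)

definition copies_term_V :: "('o, 'm) cat \<Rightarrow> nat \<Rightarrow> 'o \<Rightarrow> ('o, 'm) fv_obj" where
  "copies_term_V T n V = replicate n (V, idt T V)"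

lemma category_Hom_Obj: "is_category T \<Longrightarrow> f \<in> Hom T a b \<Longrightarrow> a \<in> Obj T \<and> b \<in> Obj T"
  unfolding is_category_def by (elim conjE) blast

lemma category_idt_Hom: "is_category T \<Longrightarrow> a \<in> Obj T \<Longrightarrow> idt T a \<in> Hom T a a"
  unfolding is_category_def by (elim conjE) blast

lemma category_idt_left: "is_category T \<Longrightarrow> f \<in> Hom T a b \<Longrightarrow> cmp T (idt T b) f = f"
  unfolding is_category_def by (elim conjE) blast

lemma category_idt_right: "is_category T \<Longrightarrow> f \<in> Hom T a b \<Longrightarrow> cmp T f (idt T a) = f"
  unfolding is_category_def by (elim conjE) blast

lemma fv_struct_copies_term_V:
  "fst (fv_struct (copies_term_V T n V)) = (\<lambda>_. 0)"
  "i < n \<Longrightarrow> snd (fv_struct (copies_term_V T n V)) i = idt T V"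
  by (simp_all add: fv_struct_def copies_term_V_def)

lemma map_fst_copies_term_V: "map fst (copies_term_V T n V) = replicate n V"
  by (simp add: copies_term_V_def)

lemma fv_obj_copies_term_V:
  "is_category T \<Longrightarrow> V \<in> Obj T \<Longrightarrow> fv_obj T V (copies_term_V T n V)"
  by (auto simp: fv_obj_def copies_term_V_def category_idt_Hom)

lemma commuting_cone_over_copies_term_V:
  assumes cat: "is_category T"
    and q1: "ft_mor T Q (replicate n W) q1" and q2: "ft_mor T Q [V] q2"
    and comm: "ft_eq Q (ft_comp T (fv_struct (copies_term_V T n W)) q1) (ft_comp T (\<lambda>_. 0, \<lambda>_. f) q2)"
    and i: "i < length Q"
  shows "fst q1 i < n" "fst q2 i = 0" "snd q2 i \<in> Hom T (Q ! i) V"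
    and "snd q1 i = cmp T f (snd q2 i)"
proof -
  have q1i: "fst q1 i < n" and "snd q1 i \<in> Hom T (Q ! i) W"
    using q1 i by (auto simp: ft_mor_def)
  then show "fst q1 i < n" by simp
  from \<open>snd q1 i \<in> Hom T (Q ! i) W\<close> have "cmp T (idt T W) (snd q1 i) = snd q1 i"
    using category_idt_left[OF cat] by blast
  moreover have "cmp T (snd (fv_struct (copies_term_V T n W)) (fst q1 i)) (snd q1 i)
                   = cmp T f (snd q2 i)"
    using comm i by (simp add: ft_eq_def ft_comp_def)
  ultimately show "snd q1 i = cmp T f (snd q2 i)"
    using q1i by (simp add: fv_struct_copies_term_V)
  show "fst q2 i = 0" "snd q2 i \<in> Hom T (Q ! i) V"
    using q2 i by (auto simp: ft_mor_def)
qed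

lemma ft_pullback_copies_term_V:
  assumes cat: "is_category T" and f: "f \<in> Hom T V W"
  shows "ft_pullback T (replicate n V) (replicate n W) [V] [W]
           (\<lambda>i. i, \<lambda>_. f) (fv_struct (copies_term_V T n V))
           (fv_struct (copies_term_V T n W)) (\<lambda>_. 0, \<lambda>_. f)"
    (is "ft_pullback T ?P ?X _ _ ?p1 ?p2 ?ff ?gg")
proof -
  have VW: "V \<in> Obj T" "W \<in> Obj T" using category_Hom_Obj[OF cat f] by blast+
  have idV: "idt T V \<in> Hom T V V" and idW: "idt T W \<in> Hom T W W"
    using category_idt_Hom[OF cat] VW by blast+
  have idl: "\<And>a b g. g \<in> Hom T a b \<Longrightarrow> cmp T (idt T b) g = g"
    using category_idt_left[OF cat] by blast
  show ?thesis
    unfolding ft_pullback_def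
  proof (intro conjI allI impI)
    show "ft_mor T ?P ?X ?p1" "ft_mor T [V] [W] ?gg"
      using VW f by (auto simp: ft_mor_def ft_obj_def)
    show "ft_mor T ?P [V] ?p2" "ft_mor T ?X [W] ?ff"
      using VW idV idW by (auto simp: ft_mor_def ft_obj_def fv_struct_copies_term_V)
    show "ft_eq ?P (ft_comp T ?ff ?p1) (ft_comp T ?gg ?p2)"
      using idl f category_idt_right[OF cat f]
      by (auto simp: ft_eq_def ft_comp_def fv_struct_copies_term_V)
  next
    fix Q q1 q2
    assume cone_hyps: "ft_mor T Q ?X q1 \<and> ft_mor T Q [V] q2 \<and>
                       ft_eq Q (ft_comp T ?ff q1) (ft_comp T ?gg q2)"
    note cone = commuting_cone_over_copies_term_V[OF cat, of Q n W q1 V q2 f, simplified cone_hyps]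
    show "\<exists>h. ft_mor T Q ?P h \<and> ft_eq Q (ft_comp T ?p1 h) q1 \<and> ft_eq Q (ft_comp T ?p2 h) q2"
    proof (intro exI conjI)
      show "ft_mor T Q ?P (fst q1, snd q2)"
        using cone_hyps cone VW by (auto simp: ft_mor_def ft_obj_def)
      show "ft_eq Q (ft_comp T ?p1 (fst q1, snd q2)) q1"
        using cone by (auto simp: ft_eq_def ft_comp_def)
      show "ft_eq Q (ft_comp T ?p2 (fst q1, snd q2)) q2"
        using cone idl by (fastforce simp: ft_eq_def ft_comp_def fv_struct_copies_term_V)
    qed
    fix h h'
    assume factorizations: "ft_mor T Q ?P h \<and> ft_eq Q (ft_comp T ?p1 h) q1 \<and> ft_eq Q (ft_comp T ?p2 h) q2 \<and>
            ft_mor T Q ?P h' \<and> ft_eq Q (ft_comp T ?p1 h') q1 \<and> ft_eq Q (ft_comp T ?p2 h') q2"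
    have "fst k i = fst q1 i \<and> snd k i = snd q2 i"
      if k: "ft_mor T Q ?P k" "ft_eq Q (ft_comp T ?p1 k) q1" "ft_eq Q (ft_comp T ?p2 k) q2"
        and i: "i < length Q" for k i
    proof
      show "fst k i = fst q1 i" using k(2) i by (simp add: ft_eq_def ft_comp_def)
      have "fst k i < n" "snd k i \<in> Hom T (Q ! i) V" using k(1) i by (auto simp: ft_mor_def)
      moreover have "cmp T (snd ?p2 (fst k i)) (snd k i) = snd q2 i"
        using k(3) i by (simp add: ft_eq_def ft_comp_def)
      ultimately show "snd k i = snd q2 i" using idl by (simp add: fv_struct_copies_term_V)
    qed
    with factorizations show "ft_eq Q h h'"
      by (simp add: ft_eq_def)
  qed
qed

lemma is_restriction_copies_term_V:
  assumes cat: "is_category T" and f: "f \<in> Hom T V W"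
  shows "is_restriction T V W f (copies_term_V T n W) (copies_term_V T n V)"
proof -
  have "V \<in> Obj T" "W \<in> Obj T" using category_Hom_Obj[OF cat f] by blast+
  then show ?thesis
    using ft_pullback_copies_term_V[OF cat f, of n] f
    unfolding is_restriction_def
    by (auto simp: fv_obj_copies_term_V[OF cat] map_fst_copies_term_V)
qed

lemma T_family_copies_term_V:
  assumes cat: "is_category T" and C: "full_T_subcat T C"
  shows "T_family T {V \<in> Obj T. copies_term_V T n V \<in> C V}"
  unfolding T_family_def
proof (intro conjI allI impI)
  fix V W f
  assume f: "f \<in> Hom T V W" and W: "W \<in> {V \<in> Obj T. copies_term_V T n V \<in> C V}"
  then show "V \<in> {V \<in> Obj T. copies_term_V T n V \<in> C V}"
    using C is_restriction_copies_term_V[OF cat f, of n] category_Hom_Obj[OF cat f]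
    unfolding full_T_subcat_def by blast
qed auto

theorem mainTheorem5:
  fixes T :: "('o, 'm) cat" and C :: "'o \<Rightarrow> ('o, 'm) fv_obj set"
  assumes "orbital T"
    and "weak_indexing_system T C"
  shows "T_family T (c_fam T C) \<and> T_family T (upsilon_fam T C) \<and> T_family T (nabla_fam T C)"
proof -
  have cat: "is_category T" using assms(1) unfolding orbital_def by blast
  have C: "full_T_subcat T C" using assms(2) unfolding weak_indexing_system_def by blast
  have "c_fam T C = {V \<in> Obj T. copies_term_V T 1 V \<in> C V}"
    by (simp add: c_fam_def term_V_def copies_term_V_def)
  moreover have "upsilon_fam T C = {V \<in> Obj T. copies_term_V T 0 V \<in> C V}"
    by (simp add: upsilon_fam_def init_V_def copies_term_V_def)
  moreover have "nabla_fam T C = {V \<in> Obj T. copies_term_V T 2 V \<in> C V}"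
    by (simp add: nabla_fam_def two_term_V_def copies_term_V_def numeral_2_eq_2)
  ultimately show ?thesis using T_family_copies_term_V[OF cat C] by metis
qed

end
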